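(* Let $A\in\mathbb C^{n\times N}$, $x_0,x\in\mathbb C^n$ with $\langle x_0,x\rangle>0$, and let $\gamma=x_0+t(x-x_0)$ for some $t\in[0,1]$. Then $$\|\Im(B_\gamma^*(x-x_0))\|\le\lambda_2(\gamma)\,\|x-x_0\|,$$ where $\lambda_2(\gamma):=\max\{\|\Im(B_\gamma^*u)\|:\ u\in\mathbb C^n,\ \langle u,\gamma\rangle=0,\ \|u\|=1\}$.
   Context: $B_y:=A\,\mathrm{diag}\big(\frac{A^*y}{|A^*y|}\big)$ for $y\in\mathbb C^n$, with componentwise quotient and convention $z(j)/|z(j)|=1$ if $z(j)=0$. The real inner product on $\mathbb C^n$ is $\langle u,v\rangle=\Re(u^*v)$. *)

theory Defs
  imports "HOL-Analysis.Analysis"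
begin

text \<open>Matrices A in C^(n x N) are represented as complex^'N^'n (row index 'n, column index 'N).\<close>

definition adj_mult :: "complex^'N^'n \<Rightarrow> complex^'n \<Rightarrow> complex^'N" where
  "adj_mult A y = (\<chi> j. \<Sum>i\<in>UNIV. cnj (A$i$j) * y$i)"

definition phase :: "complex \<Rightarrow> complex" where
  "phase z = (if z = 0 then 1 else z / complex_of_real (cmod z))"

text \<open>B_y = A diag(A^* y / |A^* y|).\<close>
definition B_mat :: "complex^'N^'n \<Rightarrow> complex^'n \<Rightarrow> complex^'N^'n" where
  "B_mat A y = (\<chi> i j. A$i$j * phase ((adj_mult A y)$j))"

definition Im_vec :: "complex^'N \<Rightarrow> real^'N" where
  "Im_vec v = (\<chi> j. Im (v$j))"

definition rinner :: "complex^'n \<Rightarrow> complex^'n \<Rightarrow> real" where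
  "rinner u v = Re (\<Sum>i\<in>UNIV. cnj (u$i) * v$i)"

text \<open>lambda_2(gamma) = max { ||Im(B_gamma^* u)|| : <u,gamma> = 0, ||u|| = 1 } (max attained; written as Sup).\<close>
definition lambda2 :: "complex^'N^'n \<Rightarrow> complex^'n \<Rightarrow> real" where
  "lambda2 A g = Sup {norm (Im_vec (adj_mult (B_mat A g) u)) | u. rinner u g = 0 \<and> norm u = 1}"

end

theory Submission
  imports Defs
begin

text \<open>Since \<open>B\<^sub>\<gamma>\<^sup>* \<gamma> = |A\<^sup>* \<gamma>|\<close> is real, the real-linear map
  \<open>v \<mapsto> Im (B\<^sub>\<gamma>\<^sup>* v)\<close> vanishes at \<open>\<gamma>\<close>. Hence only the component of \<open>x - x\<^sub>0\<close>
  orthogonal to \<open>\<gamma>\<close> contributes, and that component has norm at most \<open>\<parallel>x - x\<^sub>0\<parallel>\<close>.\<close>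

lemma orthogonal_decomposition:
  fixes d g :: "'a::real_inner"
  obtains \<alpha> u where "d = \<alpha> *\<^sub>R g + u" "inner u g = 0" "norm u \<le> norm d"
proof -
  define \<alpha> where "\<alpha> = (if g = 0 then 0 else inner d g / inner g g)"
  define u where "u = d - \<alpha> *\<^sub>R g"
  have ug: "inner u g = 0"
    by (cases "g = 0") (auto simp: u_def \<alpha>_def inner_diff_left)
  have "norm u * norm u = inner u u"
    by (simp flip: power2_eq_square power2_norm_eq_inner)
  also have "\<dots> = inner u d"
    using ug by (simp add: u_def inner_diff_right)
  also have "\<dots> \<le> norm u * norm d"
    by (rule norm_cauchy_schwarz)
  finally have "norm u \<le> norm d"
    by (cases "norm u = 0") (auto simp: mult_le_cancel_left)
  with ug show thesis
    by (intro that[of \<alpha> u]) (auto simp: u_def)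
qed

lemma norm_le_Sup_orthogonal_unit:
  fixes f :: "'a::euclidean_space \<Rightarrow> 'b::real_normed_vector"
  assumes "linear f" and "f g = 0" and "\<exists>v. inner v g = 0 \<and> norm v = 1"
  shows "norm (f d) \<le> Sup {norm (f u) | u. inner u g = 0 \<and> norm u = 1} * norm d"
    (is "_ \<le> Sup ?S * _")
proof -
  define S where "S = ?S"
  obtain C where C: "\<And>v. norm (f v) \<le> C * norm v"
    using linear_bounded[OF \<open>linear f\<close>] by blast
  have bdd: "bdd_above S"
  proof (rule bdd_aboveI)
    fix y assume "y \<in> S"
    then obtain v where "y = norm (f v)" "norm v = 1"
      unfolding S_def by blast
    with C[of v] show "y \<le> C" by simp
  qed
  have le_Sup: "norm (f w) \<le> Sup S" if "inner w g = 0" "norm w = 1" for w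
    using that by (intro cSup_upper[OF _ bdd]) (auto simp: S_def)
  have Sup_nonneg: "0 \<le> Sup S"
    using assms(3) le_Sup norm_ge_zero order_trans by blast
  obtain \<alpha> u where d: "d = \<alpha> *\<^sub>R g + u" and ug: "inner u g = 0" and nu: "norm u \<le> norm d"
    by (rule orthogonal_decomposition)
  have "f d = f u"
    using \<open>linear f\<close> \<open>f g = 0\<close> by (simp add: d linear_add linear_scale)
  moreover have "norm (f u) \<le> Sup S * norm u"
  proof (cases "u = 0")
    case True
    with \<open>linear f\<close> show ?thesis by (simp add: linear_0)
  next
    case False
    then have "f u = norm u *\<^sub>R f (u /\<^sub>R norm u)"
      using \<open>linear f\<close> by (simp add: linear_scale)
    moreover have "norm (f (u /\<^sub>R norm u)) \<le> Sup S"
      using False ug by (intro le_Sup) auto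
    ultimately show ?thesis
      by (simp add: mult.commute[of "Sup S"] mult_left_mono)
  qed
  moreover have "Sup S * norm u \<le> Sup S * norm d"
    using nu Sup_nonneg by (rule mult_left_mono)
  ultimately show ?thesis
    by (simp add: S_def)
qed

lemma rinner_eq_inner: "rinner u v = inner u v"
  unfolding rinner_def inner_vec_def
  by (simp add: Re_sum inner_complex_def algebra_simps)

lemma linear_Im_adj_mult: "linear (\<lambda>v. Im_vec (adj_mult M v))"
proof (rule linearI)
  show "Im_vec (adj_mult M (a + b)) = Im_vec (adj_mult M a) + Im_vec (adj_mult M b)" for a b
    unfolding Im_vec_def adj_mult_def
    by (simp add: vec_eq_iff distrib_left sum.distrib Im_sum)
  show "Im_vec (adj_mult M (c *\<^sub>R a)) = c *\<^sub>R Im_vec (adj_mult M a)" for c a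
    unfolding Im_vec_def adj_mult_def
    by (simp add: vec_eq_iff Im_sum sum_distrib_left algebra_simps)
qed

lemma cnj_phase_mult: "cnj (phase z) * z = complex_of_real (cmod z)"
proof (cases "z = 0")
  case False
  have "cnj z * z = complex_of_real (cmod z) ^ 2"
    using complex_norm_square[of z] by (simp add: mult.commute)
  with False show ?thesis
    by (simp add: phase_def power2_eq_square)
qed (simp add: phase_def)

lemma Im_adj_mult_B_mat_self: "Im_vec (adj_mult (B_mat A g) g) = 0"
proof -
  have "adj_mult (B_mat A g) g $ j = cnj (phase (adj_mult A g $ j)) * adj_mult A g $ j" for j
    unfolding adj_mult_def B_mat_def by (simp add: sum_distrib_right mult_ac)
  then show ?thesis
    unfolding Im_vec_def by (simp add: vec_eq_iff cnj_phase_mult)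
qed

lemma exists_unit_orthogonal: "\<exists>v::complex^'n. inner v g = 0 \<and> norm v = 1"
proof (cases "g = 0")
  case True
  obtain k :: 'n where True by blast
  have "norm (axis k (1::complex)) = 1"
    by (simp add: norm_eq_sqrt_inner inner_axis_axis)
  with True show ?thesis by (intro exI[of _ "axis k 1"]) simp
next
  case False
  \<comment> \<open>multiplication by \<open>\<i>\<close> is a real isometry rotating \<open>g\<close> by a right angle\<close>
  define h where "h = (\<chi> k. \<i> * g$k)"
  have "norm h = norm g"
    by (simp add: norm_eq_sqrt_inner h_def inner_vec_def inner_complex_def add.commute)
  moreover have "inner h g = 0"
    by (simp add: h_def inner_vec_def inner_complex_def)
  ultimately show ?thesis
    using False by (intro exI[of _ "h /\<^sub>R norm g"]) simp
qed

theorem mainTheorem8: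
  fixes A :: "complex^'N^'n" and x0 x :: "complex^'n" and t :: real
  assumes "rinner x0 x > 0" and "0 \<le> t" and "t \<le> 1"
  shows "norm (Im_vec (adj_mult (B_mat A (x0 + t *\<^sub>R (x - x0))) (x - x0)))
           \<le> lambda2 A (x0 + t *\<^sub>R (x - x0)) * norm (x - x0)"
proof -
  define g where "g = x0 + t *\<^sub>R (x - x0)"
  have "norm (Im_vec (adj_mult (B_mat A g) (x - x0))) \<le> lambda2 A g * norm (x - x0)"
    unfolding lambda2_def rinner_eq_inner
    by (intro norm_le_Sup_orthogonal_unit linear_Im_adj_mult Im_adj_mult_B_mat_self
          exists_unit_orthogonal)
  then show ?thesis by (simp add: g_def)
qed

end
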